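(* Let $n\ge2$, let $\mathbb{A}=(A_{ij})_{i,j=1}^n$ be an operator matrix as in the context, and assume that for all $i\ne j$ there are constants $c_{ij},d_{ij}\ge0$ such that $\|A_{ij}x_j\|_{X_i}\le c_{ij}\|A_{jj}x_j\|_{X_j}+d_{ij}\|x_j\|_{X_j}$ for all $x_j\in\mathcal{D}(A_{jj})$, and moreover $\sum_{i=1,i\ne j}^nc_{ij}<1$ for every $j$. Let $\pi$ be a permutation of $\{1,\ldots,n\}$. Then $\mathbb{A}(\pi)_k$ is closed on its domain for all $k\in\{1,\ldots,n\}$.
   Context: Let $X_1,\ldots,X_n$ be complex Banach spaces and $X=X_1\times\cdots\times X_n$ with norm $\|x\|=\sum_i\|x_i\|_{X_i}$. For $i,j$, $A_{ij}:\mathcal{D}(A_{ij})\subset X_j\to X_i$ are linear, $A_{ii}$ closed, and for $i\ne j$ $\mathcal{D}(A_{jj})\subset\mathcal{D}(A_{ij})$. $\mathbb{A}=(A_{ij})$ acts on $\mathcal{D}(A_{11})\times\cdots\times\mathcal{D}(A_{nn})$ by $(\mathbb{A}x)_i=\sum_jA_{ij}x_j$. For a permutation $\pi$, $\mathbb{A}(\pi):=(A_{\pi^{-1}(i),\pi^{-1}(j)})_{i,j=1}^n$ acts on $X_{\pi^{-1}(1)}\times\cdots\times X_{\pi^{-1}(n)}$ with domain $\prod_i\mathcal{D}(A_{\pi^{-1}(i),\pi^{-1}(i)})$, and $\mathbb{A}(\pi)_k$ is its upper-left $k\times k$ block, acting on $X_{\pi^{-1}(1)}\times\cdots\times X_{\pi^{-1}(k)}$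 with domain $\prod_{i=1}^k\mathcal{D}(A_{\pi^{-1}(i),\pi^{-1}(i)})$. *)

theory Defs
  imports "HOL-Analysis.Analysis" "HOL-Combinatorics.Permutations"
begin

text \<open>A complex Banach space is modelled as a real Banach space together with a
  complex structure J (multiplication by the imaginary unit).\<close>

definition cscale :: "('a::real_normed_vector \<Rightarrow> 'a) \<Rightarrow> complex \<Rightarrow> 'a \<Rightarrow> 'a" where
  "cscale J c x = Re c *\<^sub>R x + Im c *\<^sub>R J x"

definition complex_structure :: "('a::real_normed_vector \<Rightarrow> 'a) \<Rightarrow> bool" where
  "complex_structure J \<longleftrightarrow> linear J \<and> (\<forall>x. J (J x) = - x)
     \<and> (\<forall>c x. norm (cscale J c x) = cmod c * norm x)"

definition csubspace :: "('a::real_normed_vector \<Rightarrow> 'a) \<Rightarrow> 'a set \<Rightarrow> bool" where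
  "csubspace J S \<longleftrightarrow> subspace S \<and> (\<forall>x\<in>S. J x \<in> S)"

definition clinear_on :: "('a::real_normed_vector \<Rightarrow> 'a) \<Rightarrow> 'a set \<Rightarrow> ('a \<Rightarrow> 'a) \<Rightarrow> bool" where
  "clinear_on J D A \<longleftrightarrow> csubspace J D
     \<and> (\<forall>x\<in>D. \<forall>y\<in>D. A (x + y) = A x + A y)
     \<and> (\<forall>c. \<forall>x\<in>D. A (cscale J c x) = cscale J c (A x))"

definition closed_operator :: "'a::real_normed_vector set \<Rightarrow> ('a \<Rightarrow> 'a) \<Rightarrow> bool" where
  "closed_operator D A \<longleftrightarrow> closed {(x, A x) | x. x \<in> D}"

text \<open>Elements of X_{s 1} x ... x X_{s k}, represented as functions on indices
  supported in {1..k}.\<close>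
definition prod_space :: "(nat \<Rightarrow> 'a::real_normed_vector set) \<Rightarrow> (nat \<Rightarrow> nat) \<Rightarrow> nat \<Rightarrow> (nat \<Rightarrow> 'a) set" where
  "prod_space S s k = {x. (\<forall>i\<in>{1..k}. x i \<in> S (s i)) \<and> (\<forall>i. i \<notin> {1..k} \<longrightarrow> x i = 0)}"

definition prod_norm :: "nat \<Rightarrow> (nat \<Rightarrow> 'a::real_normed_vector) \<Rightarrow> real" where
  "prod_norm k x = (\<Sum>i=1..k. norm (x i))"

text \<open>The upper left k x k block of the permuted operator matrix A(pi), with
  s = pi^{-1}: domain and action.\<close>
definition block_dom :: "(nat \<Rightarrow> nat \<Rightarrow> 'a::real_normed_vector set) \<Rightarrow> (nat \<Rightarrow> nat) \<Rightarrow> nat \<Rightarrow> (nat \<Rightarrow> 'a) set" where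
  "block_dom D s k = {x. (\<forall>i\<in>{1..k}. x i \<in> D (s i) (s i)) \<and> (\<forall>i. i \<notin> {1..k} \<longrightarrow> x i = 0)}"

definition block_op :: "(nat \<Rightarrow> nat \<Rightarrow> 'a \<Rightarrow> 'a::real_normed_vector) \<Rightarrow> (nat \<Rightarrow> nat) \<Rightarrow> nat \<Rightarrow> (nat \<Rightarrow> 'a) \<Rightarrow> (nat \<Rightarrow> 'a)" where
  "block_op A s k x = (\<lambda>i. if i \<in> {1..k} then (\<Sum>j=1..k. A (s i) (s j) (x j)) else 0)"

definition block_closed :: "(nat \<Rightarrow> 'a::real_normed_vector set) \<Rightarrow> (nat \<Rightarrow> nat) \<Rightarrow> nat
     \<Rightarrow> (nat \<Rightarrow> 'a) set \<Rightarrow> ((nat \<Rightarrow> 'a) \<Rightarrow> (nat \<Rightarrow> 'a)) \<Rightarrow> bool" where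
  "block_closed S s k Dom B \<longleftrightarrow>
     (\<forall>xs x y. (\<forall>m. xs m \<in> Dom) \<and> x \<in> prod_space S s k \<and> y \<in> prod_space S s k
        \<and> (\<lambda>m. prod_norm k (\<lambda>i. xs m i - x i)) \<longlonglongrightarrow> 0
        \<and> (\<lambda>m. prod_norm k (\<lambda>i. B (xs m) i - y i)) \<longlonglongrightarrow> 0
        \<longrightarrow> x \<in> Dom \<and> B x = y)"

end

theory Submission
  imports Defs
begin

text \<open>Summing the row estimates
  \<open>\<parallel>A\<^sub>i\<^sub>i x\<^sub>i\<parallel> \<le> \<parallel>(\<A>x)\<^sub>i\<parallel> + \<Sum>\<^sub>j\<^sub>\<noteq>\<^sub>i (c\<^sub>i\<^sub>j \<parallel>A\<^sub>j\<^sub>j x\<^sub>j\<parallel> + d\<^sub>i\<^sub>j \<parallel>x\<^sub>j\<parallel>)\<close>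
  over i and exchanging the double sum gives
  \<open>\<Sum>\<^sub>j (1 - \<Sum>\<^sub>i\<^sub>\<noteq>\<^sub>j c\<^sub>i\<^sub>j) \<parallel>A\<^sub>j\<^sub>j x\<^sub>j\<parallel> \<le> \<parallel>\<A>x\<parallel> + C \<parallel>x\<parallel>\<close>, and the column
  condition makes every coefficient on the left positive. So if \<open>x\<^sub>m \<rightarrow> x\<close> and
  \<open>\<A>x\<^sub>m\<close> converges, every sequence \<open>A\<^sub>j\<^sub>j x\<^sub>m\<^sub>,\<^sub>j\<close> is Cauchy; closedness of \<open>A\<^sub>j\<^sub>j\<close>
  puts \<open>x\<^sub>j\<close> into its domain, and relative boundedness then yields convergence of
  the off-diagonal terms too. Permuting the indices and passing to an upper
  left block preserves all hypotheses, since the partial column sums of the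
  nonnegative \<open>c\<^sub>i\<^sub>j\<close> only decrease.\<close>

lemma sum_off_diagonal_swap:
  fixes f :: "'i \<Rightarrow> 'i \<Rightarrow> 'b::comm_monoid_add"
  assumes "finite I"
  shows "(\<Sum>i\<in>I. \<Sum>j\<in>I-{i}. f i j) = (\<Sum>j\<in>I. \<Sum>i\<in>I-{j}. f i j)"
  using sum.swap_restrict[OF assms assms, of f "\<lambda>i j. j \<noteq> i"]
  by (simp add: set_diff_eq eq_commute)

lemma Cauchy_if_dist_le_null:
  fixes f :: "nat \<Rightarrow> 'a::metric_space"
  assumes g: "g \<longlonglongrightarrow> 0" and dist_le: "\<And>m l. dist (f m) (f l) \<le> g m + g l"
  shows "Cauchy f"
proof (rule metric_CauchyI)
  fix e :: real assume "e > 0"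
  then obtain M where M: "\<And>m. m \<ge> M \<Longrightarrow> \<bar>g m\<bar> < e / 2"
    using g unfolding LIMSEQ_iff by (metis half_gt_zero real_norm_def diff_zero)
  have "dist (f m) (f l) < e" if "m \<ge> M" "l \<ge> M" for m l
    using dist_le[of m l] M[OF that(1)] M[OF that(2)] by linarith
  then show "\<exists>M. \<forall>m\<ge>M. \<forall>l\<ge>M. dist (f m) (f l) < e" by blast
qed

lemma closed_graph_limit:
  assumes "closed {(x, T x) | x. x \<in> E}"
    and "\<And>m. xs m \<in> E" and "xs \<longlonglongrightarrow> x" and "(\<lambda>m. T (xs m)) \<longlonglongrightarrow> z"
  shows "x \<in> E \<and> T x = z"
proof -
  have "(x, z) \<in> {(x, T x) | x. x \<in> E}"
    by (rule closed_sequentially[OF assms(1), of "\<lambda>m. (xs m, T (xs m))"])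
      (use assms(2-4) in \<open>auto intro: tendsto_Pair\<close>)
  then show ?thesis by auto
qed

lemma relatively_bounded_tendsto:
  fixes B T :: "'a::real_normed_vector \<Rightarrow> 'b::real_normed_vector"
  assumes bound: "\<And>u. u \<in> E \<Longrightarrow> norm (B u) \<le> c * norm (T u) + d * norm u"
    and diff_mem: "\<And>a b. a \<in> E \<Longrightarrow> b \<in> E \<Longrightarrow> a - b \<in> E"
    and B_diff: "\<And>a b. a \<in> E \<Longrightarrow> b \<in> E \<Longrightarrow> B (a - b) = B a - B b"
    and T_diff: "\<And>a b. a \<in> E \<Longrightarrow> b \<in> E \<Longrightarrow> T (a - b) = T a - T b"
    and xs: "\<And>m. xs m \<in> E" and x: "x \<in> E"
    and "xs \<longlonglongrightarrow> x" and "(\<lambda>m. T (xs m)) \<longlonglongrightarrow> T x"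
  shows "(\<lambda>m. B (xs m)) \<longlonglongrightarrow> B x"
proof -
  have "(\<lambda>m. B (xs m) - B x) \<longlonglongrightarrow> 0"
  proof (rule Lim_null_comparison[OF always_eventually])
    show "\<forall>m. norm (B (xs m) - B x) \<le> c * norm (T (xs m) - T x) + d * norm (xs m - x)"
      using bound[OF diff_mem[OF xs x]] by (simp add: B_diff T_diff xs x)
    show "(\<lambda>m. c * norm (T (xs m) - T x) + d * norm (xs m - x)) \<longlonglongrightarrow> 0"
      using assms by (intro tendsto_add_zero tendsto_mult_right_zero tendsto_norm_zero LIM_zero)
  qed
  then show ?thesis by (rule LIM_zero_cancel)
qed

lemma diagonal_dominance_estimate:
  fixes T :: "'i \<Rightarrow> 'i \<Rightarrow> 'a::real_normed_vector \<Rightarrow> 'a"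
  assumes fin: "finite I"
    and bound: "\<And>i j u. i \<in> I \<Longrightarrow> j \<in> I \<Longrightarrow> i \<noteq> j \<Longrightarrow> u \<in> E j \<Longrightarrow>
        norm (T i j u) \<le> c i j * norm (T j j u) + d i j * norm u"
    and u: "\<And>j. j \<in> I \<Longrightarrow> u j \<in> E j"
  shows "(\<Sum>j\<in>I. (1 - (\<Sum>i\<in>I-{j}. c i j)) * norm (T j j (u j)))
     \<le> (\<Sum>i\<in>I. norm (\<Sum>j\<in>I. T i j (u j))) + (\<Sum>i\<in>I. \<Sum>j\<in>I-{i}. d i j * norm (u j))"
proof -
  have row: "norm (T i i (u i)) \<le> norm (\<Sum>j\<in>I. T i j (u j))
      + ((\<Sum>j\<in>I-{i}. c i j * norm (T j j (u j))) + (\<Sum>j\<in>I-{i}. d i j * norm (u j)))"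
    if i: "i \<in> I" for i
  proof -
    have "T i i (u i) = (\<Sum>j\<in>I. T i j (u j)) - (\<Sum>j\<in>I-{i}. T i j (u j))"
      using sum.remove[OF fin i, of "\<lambda>j. T i j (u j)"] by simp
    then have "norm (T i i (u i)) \<le> norm (\<Sum>j\<in>I. T i j (u j)) + norm (\<Sum>j\<in>I-{i}. T i j (u j))"
      by (metis norm_triangle_ineq4)
    also have "norm (\<Sum>j\<in>I-{i}. T i j (u j)) \<le> (\<Sum>j\<in>I-{i}. norm (T i j (u j)))"
      by (rule norm_sum)
    also have "\<dots> \<le> (\<Sum>j\<in>I-{i}. c i j * norm (T j j (u j)) + d i j * norm (u j))"
      using bound i u by (intro sum_mono) auto
    finally show ?thesis by (simp add: sum.distrib)
  qed
  have "(\<Sum>i\<in>I. norm (T i i (u i))) \<le> (\<Sum>i\<in>I. norm (\<Sum>j\<in>I. T i j (u j))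
      + ((\<Sum>j\<in>I-{i}. c i j * norm (T j j (u j))) + (\<Sum>j\<in>I-{i}. d i j * norm (u j))))"
    by (rule sum_mono) (rule row)
  also have "\<dots> = (\<Sum>i\<in>I. norm (\<Sum>j\<in>I. T i j (u j)))
      + (\<Sum>i\<in>I. \<Sum>j\<in>I-{i}. c i j * norm (T j j (u j))) + (\<Sum>i\<in>I. \<Sum>j\<in>I-{i}. d i j * norm (u j))"
    by (simp add: sum.distrib)
  also have "(\<Sum>i\<in>I. \<Sum>j\<in>I-{i}. c i j * norm (T j j (u j)))
      = (\<Sum>j\<in>I. (\<Sum>i\<in>I-{j}. c i j) * norm (T j j (u j)))"
    unfolding sum_off_diagonal_swap[OF fin, of "\<lambda>i j. c i j * norm (T j j (u j))"]
    by (simp add: sum_distrib_right)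
  finally show ?thesis by (simp add: left_diff_distrib sum_subtractf)
qed

lemma diagonal_images_Cauchy:
  fixes T :: "'i \<Rightarrow> 'i \<Rightarrow> 'a::real_normed_vector \<Rightarrow> 'a"
  assumes fin: "finite I"
    and diff_mem: "\<And>j a b. j \<in> I \<Longrightarrow> a \<in> E j \<Longrightarrow> b \<in> E j \<Longrightarrow> a - b \<in> E j"
    and diff: "\<And>i j a b. i \<in> I \<Longrightarrow> j \<in> I \<Longrightarrow> a \<in> E j \<Longrightarrow> b \<in> E j \<Longrightarrow>
        T i j (a - b) = T i j a - T i j b"
    and bound: "\<And>i j u. i \<in> I \<Longrightarrow> j \<in> I \<Longrightarrow> i \<noteq> j \<Longrightarrow> u \<in> E j \<Longrightarrow>
        norm (T i j u) \<le> c i j * norm (T j j u) + d i j * norm u"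
    and d_nonneg: "\<And>i j. i \<in> I \<Longrightarrow> j \<in> I \<Longrightarrow> i \<noteq> j \<Longrightarrow> d i j \<ge> 0"
    and c_sum: "\<And>j. j \<in> I \<Longrightarrow> (\<Sum>i\<in>I-{j}. c i j) < 1"
    and xs: "\<And>m j. j \<in> I \<Longrightarrow> xs m j \<in> E j"
    and x: "\<And>j. j \<in> I \<Longrightarrow> (\<lambda>m. xs m j) \<longlonglongrightarrow> x j"
    and y: "\<And>i. i \<in> I \<Longrightarrow> (\<lambda>m. \<Sum>j\<in>I. T i j (xs m j)) \<longlonglongrightarrow> y i"
    and j: "j \<in> I"
  shows "Cauchy (\<lambda>m. T j j (xs m j))"
proof -
  define \<gamma> where "\<gamma> = 1 - (\<Sum>i\<in>I-{j}. c i j)"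
  have \<gamma>: "\<gamma> > 0" using c_sum[OF j] unfolding \<gamma>_def by simp
  define g where "g m = (\<Sum>i\<in>I. norm ((\<Sum>j\<in>I. T i j (xs m j)) - y i))
      + (\<Sum>i\<in>I. \<Sum>j\<in>I-{i}. d i j * norm (xs m j - x j))" for m
  have "g \<longlonglongrightarrow> 0"
    unfolding g_def using x y
    by (intro tendsto_add_zero tendsto_null_sum tendsto_mult_right_zero tendsto_norm_zero LIM_zero) auto
  moreover have "dist (T j j (xs m j)) (T j j (xs l j)) \<le> g m / \<gamma> + g l / \<gamma>" for m l
  proof -
    define u where "u j = xs m j - xs l j" for j
    have u: "u j \<in> E j" if "j \<in> I" for j
      unfolding u_def using diff_mem xs that by blast
    have "\<gamma> * norm (T j j (u j)) \<le> (\<Sum>j\<in>I. (1 - (\<Sum>i\<in>I-{j}. c i j)) * norm (T j j (u j)))"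
      unfolding \<gamma>_def
      by (rule member_le_sum[OF j _ fin]) (use c_sum in \<open>simp add: less_imp_le\<close>)
    also have "\<dots> \<le> (\<Sum>i\<in>I. norm (\<Sum>j\<in>I. T i j (u j))) + (\<Sum>i\<in>I. \<Sum>j\<in>I-{i}. d i j * norm (u j))"
      by (rule diagonal_dominance_estimate[OF fin bound u]) auto
    also have "(\<Sum>i\<in>I. norm (\<Sum>j\<in>I. T i j (u j)))
        \<le> (\<Sum>i\<in>I. norm ((\<Sum>j\<in>I. T i j (xs m j)) - y i) + norm ((\<Sum>j\<in>I. T i j (xs l j)) - y i))"
    proof (rule sum_mono)
      fix i assume i: "i \<in> I"
      have "(\<Sum>j\<in>I. T i j (u j))
          = ((\<Sum>j\<in>I. T i j (xs m j)) - y i) - ((\<Sum>j\<in>I. T i j (xs l j)) - y i)"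
        using diff[OF i] xs unfolding u_def by (simp add: sum_subtractf)
      then show "norm (\<Sum>j\<in>I. T i j (u j))
          \<le> norm ((\<Sum>j\<in>I. T i j (xs m j)) - y i) + norm ((\<Sum>j\<in>I. T i j (xs l j)) - y i)"
        by (metis norm_triangle_ineq4)
    qed
    also have "(\<Sum>i\<in>I. \<Sum>j\<in>I-{i}. d i j * norm (u j)) \<le>
        (\<Sum>i\<in>I. \<Sum>j\<in>I-{i}. d i j * norm (xs m j - x j) + d i j * norm (xs l j - x j))"
    proof (intro sum_mono)
      fix i j assume "i \<in> I" "j \<in> I - {i}"
      moreover have "norm (u j) \<le> norm (xs m j - x j) + norm (xs l j - x j)"
        unfolding u_def by (metis norm_triangle_ineq4 diff_diff_eq2 diff_add_cancel)
      ultimately show "d i j * norm (u j) \<le> d i j * norm (xs m j - x j) + d i j * norm (xs l j - x j)"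
        using d_nonneg[of i j] by (auto simp: distrib_left[symmetric] intro: mult_left_mono)
    qed
    finally have "\<gamma> * norm (T j j (u j)) \<le> g m + g l"
      unfolding g_def by (simp add: sum.distrib)
    moreover have "T j j (u j) = T j j (xs m j) - T j j (xs l j)"
      unfolding u_def using diff[OF j j] xs j by blast
    ultimately show ?thesis
      using \<gamma> by (simp add: dist_norm field_simps)
  qed
  ultimately show ?thesis
    by (intro Cauchy_if_dist_le_null[of "\<lambda>m. g m / \<gamma>"] tendsto_divide_zero)
qed

lemma operator_matrix_closed:
  fixes T :: "'i \<Rightarrow> 'i \<Rightarrow> 'a::banach \<Rightarrow> 'a"
  assumes fin: "finite I"
    and diff_mem: "\<And>j a b. j \<in> I \<Longrightarrow> a \<in> E j \<Longrightarrow> b \<in> E j \<Longrightarrow> a - b \<in> E j"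
    and diff: "\<And>i j a b. i \<in> I \<Longrightarrow> j \<in> I \<Longrightarrow> a \<in> E j \<Longrightarrow> b \<in> E j \<Longrightarrow>
        T i j (a - b) = T i j a - T i j b"
    and closed_diag: "\<And>j. j \<in> I \<Longrightarrow> closed {(x, T j j x) | x. x \<in> E j}"
    and bound: "\<And>i j u. i \<in> I \<Longrightarrow> j \<in> I \<Longrightarrow> i \<noteq> j \<Longrightarrow> u \<in> E j \<Longrightarrow>
        norm (T i j u) \<le> c i j * norm (T j j u) + d i j * norm u"
    and d_nonneg: "\<And>i j. i \<in> I \<Longrightarrow> j \<in> I \<Longrightarrow> i \<noteq> j \<Longrightarrow> d i j \<ge> 0"
    and c_sum: "\<And>j. j \<in> I \<Longrightarrow> (\<Sum>i\<in>I-{j}. c i j) < 1"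
    and xs: "\<And>m j. j \<in> I \<Longrightarrow> xs m j \<in> E j"
    and x: "\<And>j. j \<in> I \<Longrightarrow> (\<lambda>m. xs m j) \<longlonglongrightarrow> x j"
    and y: "\<And>i. i \<in> I \<Longrightarrow> (\<lambda>m. \<Sum>j\<in>I. T i j (xs m j)) \<longlonglongrightarrow> y i"
  shows "(\<forall>j\<in>I. x j \<in> E j) \<and> (\<forall>i\<in>I. (\<Sum>j\<in>I. T i j (x j)) = y i)"
proof -
  have diag: "x j \<in> E j \<and> (\<lambda>m. T j j (xs m j)) \<longlonglongrightarrow> T j j (x j)" if j: "j \<in> I" for j
  proof -
    obtain z where z: "(\<lambda>m. T j j (xs m j)) \<longlonglongrightarrow> z"
      using diagonal_images_Cauchy[OF fin diff_mem diff bound d_nonneg c_sum xs x y j] Cauchy_convergent_iff convergent_def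
      by blast
    show ?thesis
      using closed_graph_limit[OF closed_diag[OF j] xs[OF j] x[OF j] z] z by simp
  qed
  have "(\<lambda>m. T i j (xs m j)) \<longlonglongrightarrow> T i j (x j)" if i: "i \<in> I" and j: "j \<in> I" for i j
  proof (cases "i = j")
    case False
    show ?thesis
    proof (rule relatively_bounded_tendsto[where E="E j" and T="T j j" and xs="\<lambda>m. xs m j"])
      show "norm (T i j u) \<le> c i j * norm (T j j u) + d i j * norm u" if "u \<in> E j" for u
        using bound[OF i j False that] .
    qed (use diag[OF j] in \<open>simp_all add: diff_mem[OF j] diff[OF i j] diff[OF j j] xs[OF j] x[OF j]\<close>)
  qed (use diag j in simp)
  then have "(\<lambda>m. \<Sum>j\<in>I. T i j (xs m j)) \<longlonglongrightarrow> (\<Sum>j\<in>I. T i j (x j))" if "i \<in> I" for i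
    using that by (intro tendsto_sum) auto
  then have "(\<Sum>j\<in>I. T i j (x j)) = y i" if "i \<in> I" for i
    using that y by (metis LIMSEQ_unique)
  then show ?thesis
    using diag by blast
qed

lemma clinear_on_diff:
  assumes "clinear_on J D A" and "a \<in> D" and "b \<in> D"
  shows "a - b \<in> D" and "A (a - b) = A a - A b"
proof -
  show ab: "a - b \<in> D"
    using assms unfolding clinear_on_def csubspace_def by (auto intro: subspace_diff)
  have "A (a - b + b) = A (a - b) + A b"
    using assms ab unfolding clinear_on_def by blast
  then show "A (a - b) = A a - A b" by (simp add: algebra_simps)
qed

lemma sum_reindex_off_diagonal_le:
  fixes c :: "'j \<Rightarrow> 'j \<Rightarrow> real" and s :: "'i \<Rightarrow> 'j"
  assumes inj: "inj_on s K" and "s ` K \<subseteq> N" and "finite N" and "j \<in> K"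
    and "\<And>i. i \<in> N \<Longrightarrow> i \<noteq> s j \<Longrightarrow> c i (s j) \<ge> 0"
  shows "(\<Sum>i\<in>K-{j}. c (s i) (s j)) \<le> (\<Sum>i\<in>N-{s j}. c i (s j))"
proof -
  have "(\<Sum>i\<in>K-{j}. c (s i) (s j)) = (\<Sum>i\<in>s ` (K-{j}). c i (s j))"
    using inj by (simp add: sum.reindex inj_on_diff)
  also have "\<dots> \<le> (\<Sum>i\<in>N-{s j}. c i (s j))"
    using assms by (intro sum_mono2) (auto simp: inj_on_eq_iff)
  finally show ?thesis .
qed

lemma prod_norm_tendsto_component:
  assumes "(\<lambda>m. prod_norm k (\<lambda>i. f m i - l i)) \<longlonglongrightarrow> 0" and "i \<in> {1..k}"
  shows "(\<lambda>m. f m i) \<longlonglongrightarrow> l i"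
proof -
  have "(\<lambda>m. f m i - l i) \<longlonglongrightarrow> 0"
  proof (rule Lim_null_comparison[OF always_eventually])
    show "\<forall>m. norm (f m i - l i) \<le> prod_norm k (\<lambda>i. f m i - l i)"
      unfolding prod_norm_def using assms(2) by (auto intro: member_le_sum)
  qed (rule assms(1))
  then show ?thesis by (rule LIM_zero_cancel)
qed

lemma block_closedI:
  assumes "\<And>xs x y. (\<And>m j. j \<in> {1..k} \<Longrightarrow> xs m j \<in> D (s j) (s j)) \<Longrightarrow>
      (\<And>j. j \<in> {1..k} \<Longrightarrow> (\<lambda>m. xs m j) \<longlonglongrightarrow> x j) \<Longrightarrow>
      (\<And>i. i \<in> {1..k} \<Longrightarrow> (\<lambda>m. \<Sum>j\<in>{1..k}. A (s i) (s j) (xs m j)) \<longlonglongrightarrow> y i) \<Longrightarrow>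
      (\<forall>j\<in>{1..k}. x j \<in> D (s j) (s j)) \<and> (\<forall>i\<in>{1..k}. (\<Sum>j\<in>{1..k}. A (s i) (s j) (x j)) = y i)"
  shows "block_closed S s k (block_dom D s k) (block_op A s k)"
  unfolding block_closed_def
proof (intro allI impI, elim conjE)
  fix xs x y
  assume xs: "\<forall>m. xs m \<in> block_dom D s k" and x: "x \<in> prod_space S s k" and y: "y \<in> prod_space S s k"
    and "(\<lambda>m. prod_norm k (\<lambda>i. xs m i - x i)) \<longlonglongrightarrow> 0"
    and Axs_y: "(\<lambda>m. prod_norm k (\<lambda>i. block_op A s k (xs m) i - y i)) \<longlonglongrightarrow> 0"
  then have "(\<forall>j\<in>{1..k}. x j \<in> D (s j) (s j)) \<and> (\<forall>i\<in>{1..k}. (\<Sum>j\<in>{1..k}. A (s i) (s j) (x j)) = y i)"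
  proof (intro assms)
    show "xs m j \<in> D (s j) (s j)" if "j \<in> {1..k}" for m j
      using xs that by (simp add: block_dom_def)
    show "(\<lambda>m. xs m j) \<longlonglongrightarrow> x j" if "j \<in> {1..k}" for j
      by (rule prod_norm_tendsto_component) fact+
    show "(\<lambda>m. \<Sum>j\<in>{1..k}. A (s i) (s j) (xs m j)) \<longlonglongrightarrow> y i" if "i \<in> {1..k}" for i
      using prod_norm_tendsto_component[OF Axs_y that] that by (simp add: block_op_def)
  qed
  then show "x \<in> block_dom D s k \<and> block_op A s k x = y"
    using x y by (auto simp: block_dom_def block_op_def prod_space_def)
qed

lemma block_closed_reindex:
  fixes A :: "nat \<Rightarrow> nat \<Rightarrow> 'a::banach \<Rightarrow> 'a" and c d :: "nat \<Rightarrow> nat \<Rightarrow> real"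
  assumes s_inj: "inj_on s {1..k}" and s_in: "\<And>i. i \<in> {1..k} \<Longrightarrow> s i \<in> N" and "finite N"
    and A_lin: "\<forall>i\<in>N. \<forall>j\<in>N. clinear_on J (D i j) (A i j)"
    and A_diag_closed: "\<forall>i\<in>N. closed_operator (D i i) (A i i)"
    and D_incl: "\<forall>i\<in>N. \<forall>j\<in>N. i \<noteq> j \<longrightarrow> D j j \<subseteq> D i j"
    and cd_nonneg: "\<forall>i\<in>N. \<forall>j\<in>N. i \<noteq> j \<longrightarrow> c i j \<ge> 0 \<and> d i j \<ge> 0"
    and rel_bound: "\<forall>i\<in>N. \<forall>j\<in>N. i \<noteq> j \<longrightarrow>
        (\<forall>x\<in>D j j. norm (A i j x) \<le> c i j * norm (A j j x) + d i j * norm x)"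
    and c_sum: "\<forall>j\<in>N. (\<Sum>i\<in>N - {j}. c i j) < 1"
  shows "block_closed S s k (block_dom D s k) (block_op A s k)"
proof -
  have s_neq: "s i \<noteq> s j" if "i \<in> {1..k}" "j \<in> {1..k}" "i \<noteq> j" for i j
    using inj_onD[OF s_inj] that by blast
  have lin: "clinear_on J (D (s i) (s j)) (A (s i) (s j))" if "i \<in> {1..k}" "j \<in> {1..k}" for i j
    using A_lin s_in that by blast
  have dom_incl: "D (s j) (s j) \<subseteq> D (s i) (s j)" if "i \<in> {1..k}" "j \<in> {1..k}" for i j
    using D_incl s_in that by (cases "s i = s j") auto
  show ?thesis
  proof (rule block_closedI, rule operator_matrix_closed)
    show "a - b \<in> D (s j) (s j)" if "j \<in> {1..k}" "a \<in> D (s j) (s j)" "b \<in> D (s j) (s j)" for j a b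
      using clinear_on_diff(1)[OF lin[OF that(1,1)] that(2,3)] .
    show "A (s i) (s j) (a - b) = A (s i) (s j) a - A (s i) (s j) b"
      if "i \<in> {1..k}" "j \<in> {1..k}" "a \<in> D (s j) (s j)" "b \<in> D (s j) (s j)" for i j a b
      using clinear_on_diff(2)[OF lin[OF that(1,2)]] dom_incl[OF that(1,2)] that(3,4) by blast
    show "closed {(x, A (s j) (s j) x) | x. x \<in> D (s j) (s j)}" if "j \<in> {1..k}" for j
      using A_diag_closed s_in[OF that] unfolding closed_operator_def by blast
    show "norm (A (s i) (s j) u) \<le> c (s i) (s j) * norm (A (s j) (s j) u) + d (s i) (s j) * norm u"
      if "i \<in> {1..k}" "j \<in> {1..k}" "i \<noteq> j" "u \<in> D (s j) (s j)" for i j u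
      using rel_bound s_in[OF that(1)] s_in[OF that(2)] s_neq[OF that(1-3)] that(4) by blast
    show "d (s i) (s j) \<ge> 0" if "i \<in> {1..k}" "j \<in> {1..k}" "i \<noteq> j" for i j
      using cd_nonneg s_in[OF that(1)] s_in[OF that(2)] s_neq[OF that] by blast
    show "(\<Sum>i\<in>{1..k}-{j}. c (s i) (s j)) < 1" if "j \<in> {1..k}" for j
    proof (rule le_less_trans)
      show "(\<Sum>i\<in>{1..k}-{j}. c (s i) (s j)) \<le> (\<Sum>i\<in>N-{s j}. c i (s j))"
        using s_in s_inj that cd_nonneg \<open>finite N\<close> by (intro sum_reindex_off_diagonal_le) auto
      show "(\<Sum>i\<in>N-{s j}. c i (s j)) < 1"
        using c_sum s_in[OF that] by blast
    qed
  qed simp_all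
qed

theorem lemma5p4:
  fixes J :: "'a::banach \<Rightarrow> 'a"
    and n :: nat
    and S :: "nat \<Rightarrow> 'a set"
    and D :: "nat \<Rightarrow> nat \<Rightarrow> 'a set"
    and A :: "nat \<Rightarrow> nat \<Rightarrow> 'a \<Rightarrow> 'a"
    and c d :: "nat \<Rightarrow> nat \<Rightarrow> real"
    and \<pi> :: "nat \<Rightarrow> nat"
  assumes J: "complex_structure J"
    and n2: "n \<ge> 2"
    and S_closed: "\<forall>i\<in>{1..n}. csubspace J (S i) \<and> closed (S i)"
    and D_sub: "\<forall>i\<in>{1..n}. \<forall>j\<in>{1..n}. D i j \<subseteq> S j"
    and A_lin: "\<forall>i\<in>{1..n}. \<forall>j\<in>{1..n}. clinear_on J (D i j) (A i j)"
    and A_maps: "\<forall>i\<in>{1..n}. \<forall>j\<in>{1..n}. \<forall>x\<in>D i j. A i j x \<in> S i"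
    and A_diag_closed: "\<forall>i\<in>{1..n}. closed_operator (D i i) (A i i)"
    and D_incl: "\<forall>i\<in>{1..n}. \<forall>j\<in>{1..n}. i \<noteq> j \<longrightarrow> D j j \<subseteq> D i j"
    and cd_nonneg: "\<forall>i\<in>{1..n}. \<forall>j\<in>{1..n}. i \<noteq> j \<longrightarrow> c i j \<ge> 0 \<and> d i j \<ge> 0"
    and rel_bound: "\<forall>i\<in>{1..n}. \<forall>j\<in>{1..n}. i \<noteq> j \<longrightarrow>
        (\<forall>x\<in>D j j. norm (A i j x) \<le> c i j * norm (A j j x) + d i j * norm x)"
    and c_sum: "\<forall>j\<in>{1..n}. (\<Sum>i\<in>{1..n} - {j}. c i j) < 1"
    and perm: "\<pi> permutes {1..n}"
  shows "\<forall>k\<in>{1..n}. block_closed S (inv \<pi>) k (block_dom D (inv \<pi>) k) (block_op A (inv \<pi>) k)"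
proof
  fix k assume k: "k \<in> {1..n}"
  have inv_perm: "inv \<pi> permutes {1..n}"
    using perm by (rule permutes_inv)
  show "block_closed S (inv \<pi>) k (block_dom D (inv \<pi>) k) (block_op A (inv \<pi>) k)"
  proof (rule block_closed_reindex[where N="{1..n}"])
    show "inj_on (inv \<pi>) {1..k}"
      using permutes_inj[OF inv_perm] by (rule inj_on_subset) simp
    show "inv \<pi> i \<in> {1..n}" if "i \<in> {1..k}" for i
      using permutes_in_image[OF inv_perm] that k by auto
  qed (use A_lin A_diag_closed D_incl cd_nonneg rel_bound c_sum in simp_all)
qed

end
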